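(* Let $T=2^t$ with $t\ge1$, and let $A_1,\ldots,A_r$ be subsets of $\mathbb Z_T$, each of size at least $2$, with $r\ge T^3$. Then the multiset $A_1+A_2+\cdots+A_r$ has bias at most $O(T^{3/2}/r^{1/2})$ with respect to the subgroup $\{0,2^{t-1}\}$ (i.e. at most $c_0T^{3/2}/r^{1/2}$ for an absolute constant $c_0$).
   Context: $\mathbb Z_T$ is the additive cyclic group of order $T$. For multisets $A,B$ of $\mathbb Z_T$, $A+B$ is the multiset $\{a+b: a\in A, b\in B\}$ (with multiplicities). $\mu_A(x)$ denotes the multiplicity of $x$ in $A$. A multiset $A$ has bias at most $\epsilon$ with respect to a subgroup $H\le\mathbb Z_T$ if $\mu_A(a)\le(1+\epsilon)\mu_A(a+h)$ for all $a\in A$ and all $h\in H$. *)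

theory Defs
  imports Complex_Main "HOL-Library.Multiset"
begin

text \<open>Elements of Z_T are represented by the residues 0..T-1 (type nat).\<close>

definition zmod_set :: "nat \<Rightarrow> nat set" where
  "zmod_set T = {..<T}"

fun sumset_mset :: "nat \<Rightarrow> (nat \<Rightarrow> nat set) \<Rightarrow> nat \<Rightarrow> nat multiset" where
  "sumset_mset T A 0 = {#0#}"
| "sumset_mset T A (Suc k) =
     (\<Sum>a\<in>A k. image_mset (\<lambda>x. (x + a) mod T) (sumset_mset T A k))"

definition bias_at_most :: "nat \<Rightarrow> nat multiset \<Rightarrow> nat set \<Rightarrow> real \<Rightarrow> bool" where
  "bias_at_most T M H eps \<longleftrightarrow>
     (\<forall>a\<in>#M. \<forall>h\<in>H. real (count M a) \<le> (1 + eps) * real (count M ((a + h) mod T)))"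

end

theory Submission
  imports Defs "HOL-Number_Theory.Cong" "HOL-Library.Discrete_Functions" "HOL-Library.FuncSet"
begin

text \<open>
  Since \<open>2 (|A| - 1) 1\<^sub>A\<close> is the sum of \<open>\<delta>\<^sub>a + \<delta>\<^sub>a\<^sub>'\<close> over
  the ordered pairs \<open>a \<noteq> a'\<close> of \<open>A\<close>, the multiset \<open>A\<^sub>1 + \<dots> + A\<^sub>r\<close> is, up to a positive factor,
  a nonnegative combination of distributions of \<open>b + \<Sum>\<^sub>i\<^sub>\<in>\<^sub>J d\<^sub>i\<close>, where \<open>J\<close> ranges over the
  subsets of \<open>{0..<r}\<close> and \<open>0 < d\<^sub>i < T\<close>. Bias with respect to \<open>{0, T/2}\<close> survives
  nonnegative combinations and convolutions, so it suffices to bound it for the indices on which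
  \<open>d\<close> takes its most frequent value \<open>c\<close>; there are \<open>n \<ge> r/T \<ge> T\<^sup>2\<close> of them, and they
  contribute the binomial distribution pushed forward along \<open>j \<mapsto> b + j c\<close>. Writing
  \<open>c = 2\<^sup>v u\<close> with \<open>u\<close> odd, this progression has period \<open>2h = 2\<^sup>t\<^sup>-\<^sup>v\<close> modulo \<open>T\<close>, and
  shifting \<open>j\<close> by \<open>h\<close> shifts its value by \<open>T/2\<close>. So one compares the binomial masses of two
  residue classes modulo \<open>2h\<close> that differ by \<open>h\<close>: they differ by at most twice the central
  binomial coefficient, while each class collects a constant times \<open>\<surd>n/h\<close> times that
  coefficient from a window of width \<open>\<surd>n\<close> around \<open>n/2\<close>. This gives bias \<open>O(h/\<surd>n) = O(T\<^sup>3\<^sup>/\<^sup>2/\<surd>r)\<close>.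
\<close>

section \<open>Binomial coefficients near the centre\<close>

lemma binomial_Suc_mult: "(n choose Suc k) * Suc k = (n choose k) * (n - k)"
  by (metis binomial_absorb_comp binomial_absorption mult.commute)

lemma binomial_Suc_lower:
  assumes "2 * p \<le> n + 1"
  shows "(real p - 1 - real k) * real (n choose (p + k))
    \<le> (real p + 1 + real k) * real (n choose Suc (p + k))"
proof -
  have "p \<le> n - (p + k) + 1 + k" using assms by linarith
  then have "real p \<le> real (n - (p + k) + 1 + k)" by (simp only: of_nat_le_iff)
  then have "(real p - 1 - real k) * real (n choose (p + k))
      \<le> real (n - (p + k)) * real (n choose (p + k))"
    by (intro mult_right_mono) simp_all
  also have "\<dots> = (real p + 1 + real k) * real (n choose Suc (p + k))"
  proof -
    have "real ((n choose Suc (p + k)) * Suc (p + k)) = real ((n choose (p + k)) * (n - (p + k)))"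
      by (simp only: binomial_Suc_mult)
    then show ?thesis unfolding of_nat_mult by (simp add: ac_simps)
  qed
  finally show ?thesis .
qed

lemma binomial_shift_lower_bound:
  assumes "2 * p \<le> n + 1"
  shows "real (n choose p) * (real p + 1 - real (k * (k + 1)))
    \<le> (real p + 1) * real (n choose (p + k))"
proof (induction k)
  case 0
  then show ?case by simp
next
  case (Suc k)
  define M where "M = real (n choose p)"
  define a where "a = real p + 1"
  have "M \<ge> 0" by (simp add: M_def)
  have sq: "real ((k + 1) * (k + 2)) = (real k + 1) * (real k + 2)" by (simp add: algebra_simps)
  show ?case
  proof (cases "(k + 1) * (k + 2) \<le> p + 1")
    case False
    then have "real (p + 1) < real ((k + 1) * (k + 2))"
      by (simp only: of_nat_less_iff)
    then have "M * (a - (real k + 1) * (real k + 2)) \<le> 0"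
      using \<open>M \<ge> 0\<close> unfolding a_def sq by (intro mult_nonneg_nonpos) simp_all
    also have "0 \<le> a * real (n choose (p + Suc k))" by (simp add: a_def)
    finally show ?thesis by (simp add: M_def a_def algebra_simps)
  next
    case True
    have "(k + 1) * 2 \<le> (k + 1) * (k + 2)" by simp
    with True have k: "0 \<le> a - 2 - real k" by (simp add: a_def)
    have "M * (a - (real k + 1) * (real k + 2)) * (a + real k)
        \<le> M * (a - real k * (real k + 1)) * (a - 2 - real k)"
    proof -
      have "M * (a - real k * (real k + 1)) * (a - 2 - real k)
          - M * (a - (real k + 1) * (real k + 2)) * (a + real k)
          = 2 * M * real k * (real k + 1) * (real k + 2)"
        by (simp add: algebra_simps)
      moreover have "0 \<le> 2 * M * real k * (real k + 1) * (real k + 2)"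
        using \<open>M \<ge> 0\<close> by simp
      ultimately show ?thesis by linarith
    qed
    also have "\<dots> \<le> a * real (n choose (p + k)) * (a - 2 - real k)"
      using Suc k by (intro mult_right_mono) (simp_all add: M_def a_def algebra_simps)
    also have "\<dots> = a * ((a - 2 - real k) * real (n choose (p + k)))"
      by (simp only: ac_simps)
    also have "\<dots> \<le> a * ((a + real k) * real (n choose (p + Suc k)))"
      using binomial_Suc_lower[OF assms, of k] by (intro mult_left_mono) (simp_all add: a_def)
    finally have "M * (a - (real k + 1) * (real k + 2)) * (a + real k)
        \<le> a * real (n choose (p + Suc k)) * (a + real k)"
      by (simp only: ac_simps)
    then have "M * (a - (real k + 1) * (real k + 2)) \<le> a * real (n choose (p + Suc k))"
      by (rule mult_right_le_imp_le) (simp add: a_def add_pos_nonneg)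
    then show ?thesis
      by (simp add: M_def a_def algebra_simps)
  qed
qed

lemma binomial_le_8_binomial_shift:
  assumes "2 * p \<le> n + 1" "8 * (k * (k + 1)) \<le> 7 * (p + 1)"
  shows "real (n choose p) \<le> 8 * real (n choose (p + k))"
proof -
  define K where "K = k * (k + 1)"
  have "real (8 * K) \<le> real (7 * (p + 1))"
    using assms(2) unfolding K_def by (simp only: of_nat_le_iff)
  then have "(real p + 1) / 8 \<le> real p + 1 - real K"
    by simp
  then have "real (n choose p) * ((real p + 1) / 8) \<le> real (n choose p) * (real p + 1 - real K)"
    by (rule mult_left_mono) simp
  also have "\<dots> \<le> (real p + 1) * real (n choose (p + k))"
    unfolding K_def by (rule binomial_shift_lower_bound[OF assms(1)])
  finally have "(real p + 1) * real (n choose p) \<le> (real p + 1) * (8 * real (n choose (p + k)))"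
    by (simp add: field_simps)
  then show ?thesis
    by (rule mult_left_le_imp_le) simp
qed

lemma binomial_central_le_8_binomial:
  assumes "4 * w\<^sup>2 \<le> n" "j \<le> n div 2 + w" "n div 2 \<le> j + w"
  shows "real (n choose (n div 2)) \<le> 8 * real (n choose j)"
proof -
  define q where "q = n div 2"
  have "8 * w \<le> 4 * (w * w) + 4"
  proof (cases "w \<le> 1")
    case False
    then show ?thesis using mult_le_mono1[of 8 "4 * w" w] by linarith
  qed (auto simp: le_Suc_eq)
  moreover have n: "n \<le> 2 * q + 1" "2 * q \<le> n" "4 * (w * w) \<le> n"
    using assms(1) by (simp_all add: q_def power2_eq_square)
  moreover have "w * (w + 1) = w * w + w" by simp
  ultimately have w: "8 * (w * (w + 1)) \<le> 7 * (q + 1)"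
    by (cases "n = 0") simp_all
  have near: "real (n choose p) \<le> 8 * real (n choose (p + k))"
    if "2 * p \<le> n + 1" "q \<le> p" "k \<le> w" for p k
  proof (rule binomial_le_8_binomial_shift[OF that(1)])
    have "8 * (k * (k + 1)) \<le> 8 * (w * (w + 1))"
      using that(3) by (intro mult_le_mono) simp_all
    also have "\<dots> \<le> 7 * (q + 1)" by (rule w)
    also have "\<dots> \<le> 7 * (p + 1)" using that(2) by simp
    finally show "8 * (k * (k + 1)) \<le> 7 * (p + 1)" .
  qed
  show ?thesis
  proof (cases "q \<le> j")
    case True
    then show ?thesis
      using near[of q "j - q"] assms(2) n(2) by (simp add: q_def)
  next
    case False
    have "n choose j = n choose (n - q + (q - j))"
      using False binomial_symmetric[of j n] unfolding q_def by simp
    moreover have "n choose (n - q) = n choose q"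
      using binomial_symmetric[of q n] unfolding q_def by simp
    ultimately show ?thesis
      using near[of "n - q" "q - j"] False assms(3) unfolding q_def by simp
  qed
qed

lemma binomial_le_binomial_add:
  assumes "2 * j + h \<le> n"
  shows "n choose j \<le> n choose (j + h)"
proof (cases "2 * (j + h) \<le> n")
  case True
  then show ?thesis by (intro binomial_mono) simp_all
next
  case False
  have "n choose (j + h) = n choose (n - (j + h))"
    using assms by (intro binomial_symmetric) simp
  moreover have "n choose j \<le> n choose (n - (j + h))"
    using assms False by (intro binomial_mono) simp_all
  ultimately show ?thesis by simp
qed

lemma binomial_le_binomial_diff:
  assumes "n + h \<le> 2 * j"
  shows "n choose j \<le> n choose (j - h)"
proof (cases "j \<le> n")
  case True
  have "n choose (n - j) \<le> n choose (n - j + h)"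
    using assms True by (intro binomial_le_binomial_add) simp
  moreover have "n choose j = n choose (n - j)"
    using True by (rule binomial_symmetric)
  moreover have "n choose (j - h) = n choose (n - (j - h))"
    using True by (intro binomial_symmetric) simp
  moreover have "n - (j - h) = n - j + h" using assms True by simp
  ultimately show ?thesis by simp
qed (simp add: binomial_eq_0)

section \<open>Binomial mass of residue classes\<close>

definition binomial_residue_sum :: "nat \<Rightarrow> nat \<Rightarrow> nat \<Rightarrow> real" where
  "binomial_residue_sum n m a = (\<Sum>j | j \<le> n \<and> [j = a] (mod m). real (n choose j))"

lemma cong_less_imp_add_le:
  fixes y y' m :: nat
  assumes "[y = y'] (mod m)" "y < y'" "0 < m"
  shows "y + m \<le> y'"
proof -
  have "[y' = y] (mod m)"
    using assms(1) by (rule cong_sym)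
  then have "m dvd y' - y"
    using assms(2) by (simp add: cong_altdef_nat)
  then have "m \<le> y' - y"
    using assms(2) by (simp add: dvd_imp_le)
  then show ?thesis using assms(2) by linarith
qed

lemma residue_class_near_half_unique:
  fixes n h y y' :: nat
  assumes "1 \<le> h" "[y = y'] (mod 2 * h)"
    and "n \<le> 2 * y + h" "2 * y \<le> n + h" "n \<le> 2 * y' + h" "2 * y' \<le> n + h"
  shows "y = y'"
proof (rule ccontr)
  assume "y \<noteq> y'"
  then consider "y < y'" | "y' < y" by linarith
  then show False
  proof cases
    case 1
    then have "y + 2 * h \<le> y'"
      using assms(1,2) by (intro cong_less_imp_add_le) simp_all
    then show False using assms by linarith
  next
    case 2
    then have "y' + 2 * h \<le> y"
      using assms(1,2) by (intro cong_less_imp_add_le) (simp_all add: cong_sym_eq)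
    then show False using assms by linarith
  qed
qed

lemma sum_binomial_near_half_le:
  fixes n h b :: nat
  assumes "1 \<le> h" "finite S"
    and "\<And>y. y \<in> S \<Longrightarrow> n \<le> 2 * y + h \<and> 2 * y \<le> n + h \<and> [y = b] (mod 2 * h)"
  shows "(\<Sum>j\<in>S. real (n choose j)) \<le> real (n choose (n div 2))"
proof -
  have "y = y'" if "y \<in> S" "y' \<in> S" for y y'
    using assms(3)[OF that(1)] assms(3)[OF that(2)]
    by (intro residue_class_near_half_unique[OF assms(1)]) (auto intro: cong_trans cong_sym)
  then have "card S \<le> 1"
    using card_le_Suc0_iff_eq[OF assms(2)] by simp
  then have "real (card S) * real (n choose (n div 2)) \<le> real (n choose (n div 2))"
    by (simp add: mult_le_cancel_right1)
  moreover have "(\<Sum>j\<in>S. real (n choose j)) \<le> real (card S) * real (n choose (n div 2))"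
    using sum_bounded_above[of S "\<lambda>j. real (n choose j)"] binomial_maximum by simp
  ultimately show ?thesis by linarith
qed

lemma cong_diff_add_double:
  fixes h j :: nat
  assumes "h \<le> j"
  shows "[j - h = j + h] (mod 2 * h)"
proof -
  have "(j - h) mod (2 * h) = (j - h + 2 * h) mod (2 * h)" by simp
  also have "j - h + 2 * h = j + h" using assms by simp
  finally show ?thesis by (simp only: cong_def)
qed

lemma sum_le_sum_image:
  fixes g :: "'a \<Rightarrow> 'b::ordered_comm_monoid_add"
  assumes "inj_on f L" "\<And>j. j \<in> L \<Longrightarrow> g j \<le> g (f j)"
  shows "sum g L \<le> sum g (f ` L)"
  using assms by (simp add: sum.reindex sum_mono)

lemma binomial_residue_sum_le_shift:
  assumes "1 \<le> h"
  shows "binomial_residue_sum n (2 * h) a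
    \<le> binomial_residue_sum n (2 * h) (a + h) + 2 * real (n choose (n div 2))"
proof -
  define C where "C j = real (n choose j)" for j
  define M where "M = real (n choose (n div 2))"
  define X where "X = {j. j \<le> n \<and> [j = a] (mod 2 * h)}"
  define Y where "Y = {j. j \<le> n \<and> [j = a + h] (mod 2 * h)}"
  define L where "L = {j \<in> X. 2 * j + h \<le> n}"
  define R where "R = {j \<in> X. n + h \<le> 2 * j}"
  define U where "U = (\<lambda>j. j + h) ` L"
  define V where "V = (\<lambda>j. j - h) ` R"
  (* Each j in X moves by h towards n/2, into Y, without decreasing its binomial coefficient.
     What cannot move, and what is hit twice, lies within h/2 of n/2. *)
  have fin: "finite X" "finite Y" "finite L" "finite R" "finite U" "finite V"
    by (simp_all add: X_def Y_def L_def R_def U_def V_def)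
  have "L \<inter> R = {}" "L \<union> R \<subseteq> X"
    using assms by (auto simp: L_def R_def)
  then have sum_X: "sum C X = sum C L + sum C R + sum C (X - (L \<union> R))"
    using fin by (simp add: sum.subset_diff[of "L \<union> R" X] sum.union_disjoint)
  have R: "h \<le> j" "j \<le> n" "[j = a] (mod 2 * h)" if "j \<in> R" for j
    using that assms by (auto simp: R_def X_def)
  have sum_L: "sum C L \<le> sum C U"
    unfolding U_def by (rule sum_le_sum_image) (simp_all add: C_def L_def binomial_le_binomial_add)
  have sum_R: "sum C R \<le> sum C V"
    unfolding V_def using R
    by (intro sum_le_sum_image inj_on_diff_nat) (simp_all add: C_def R_def binomial_le_binomial_diff)
  have "U \<subseteq> Y"
    by (auto simp: U_def L_def X_def Y_def intro: cong_add)
  moreover have "V \<subseteq> Y"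
  proof
    fix y assume "y \<in> V"
    then obtain j where j: "j \<in> R" "y = j - h" by (auto simp: V_def)
    have "[j - h = a + h] (mod 2 * h)"
      using cong_diff_add_double[OF R(1)[OF j(1)]] cong_add[OF R(3)[OF j(1)] cong_refl]
      by (rule cong_trans)
    then show "y \<in> Y" using j R(2)[OF j(1)] by (simp add: Y_def)
  qed
  ultimately have "sum C U + sum C V \<le> sum C Y + sum C (U \<inter> V)"
    using fin sum.union_inter[of U V C] sum_mono2[of Y "U \<union> V" C] by (simp add: C_def)
  moreover have "sum C (U \<inter> V) \<le> M"
    unfolding C_def M_def using fin \<open>U \<subseteq> Y\<close> assms
    by (intro sum_binomial_near_half_le[where b = "a + h"]) (auto simp: U_def V_def L_def R_def Y_def)
  moreover have "sum C (X - (L \<union> R)) \<le> M"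
    unfolding C_def M_def using fin assms
    by (intro sum_binomial_near_half_le[where b = a]) (auto simp: X_def L_def R_def)
  ultimately show ?thesis
    using sum_X sum_L sum_R unfolding binomial_residue_sum_def C_def M_def X_def Y_def by linarith
qed

lemma exists_cong_in_interval:
  fixes a l m :: nat
  assumes "1 \<le> m"
  obtains b where "l \<le> b" "b < l + m" "[b = a] (mod m)"
proof
  define b where "b = l + (a + m * l - l) mod m"
  show "l \<le> b" "b < l + m"
    using assms by (simp_all add: b_def)
  have "l \<le> m * l" using assms by simp
  then have "l + (a + m * l - l) = a + m * l" by arith
  then have "b mod m = (a + m * l) mod m"
    unfolding b_def by (metis mod_add_right_eq)
  then show "[b = a] (mod m)"
    by (simp add: cong_def)
qed

lemma binomial_residue_sum_lower:
  assumes "1 \<le> m" "4 * w\<^sup>2 \<le> n"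
  shows "real ((2 * w + 1) div m) * real (n choose (n div 2)) \<le> 8 * binomial_residue_sum n m a"
proof -
  define q where "q = n div 2"
  define K where "K = (2 * w + 1) div m"
  have "w \<le> w * w" by (rule le_square)
  then have wq: "w \<le> q" "q + w \<le> n"
    using assms(2) unfolding q_def power2_eq_square by linarith+
  obtain b where b: "q - w \<le> b" "b < q - w + m" "[b = a] (mod m)"
    using exists_cong_in_interval[OF assms(1)] .
  define S where "S = (\<lambda>i. b + i * m) ` {..<K}"
  have window: "q - w \<le> b + i * m \<and> b + i * m \<le> q + w" if "i < K" for i
  proof -
    have "i * m + m \<le> K * m"
      using that by (metis Suc_leI add.commute mult_Suc mult_le_mono1)
    moreover have "K * m \<le> 2 * w + 1"
      by (simp add: K_def)
    ultimately show ?thesis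
      using b wq by linarith
  qed
  have "S \<subseteq> {j. j \<le> n \<and> [j = a] (mod m)}"
  proof
    fix j assume "j \<in> S"
    then obtain i where i: "i < K" "j = b + i * m" by (auto simp: S_def)
    have "[b + i * m = b] (mod m)" by (simp add: cong_def)
    then show "j \<in> {j. j \<le> n \<and> [j = a] (mod m)}"
      using window[OF i(1)] wq i(2) b(3) cong_trans by auto
  qed
  then have "(\<Sum>j\<in>S. real (n choose j)) \<le> binomial_residue_sum n m a"
    unfolding binomial_residue_sum_def by (intro sum_mono2) auto
  moreover have "(\<Sum>j\<in>S. real (n choose j)) = (\<Sum>i<K. real (n choose (b + i * m)))"
    unfolding S_def using assms(1) by (subst sum.reindex) (auto simp: inj_on_def)
  moreover have "real (n choose q) \<le> 8 * real (n choose (b + i * m))" if "i < K" for i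
    using window[OF that] unfolding q_def
    by (intro binomial_central_le_8_binomial[OF assms(2)]) linarith+
  then have "real K * real (n choose q) \<le> 8 * (\<Sum>i<K. real (n choose (b + i * m)))"
    using sum_mono[of "{..<K}" "\<lambda>_. real (n choose q)" "\<lambda>i. 8 * real (n choose (b + i * m))"]
    by (simp add: sum_distrib_left)
  ultimately show ?thesis
    unfolding K_def q_def by linarith
qed

lemma window_width_exists:
  fixes m n :: nat
  assumes "1 \<le> m" "m\<^sup>2 \<le> n"
  obtains w where "4 * w\<^sup>2 \<le> n" "sqrt (real n) < 2 * real ((2 * w + 1) div m) * real m"
proof -
  define s where "s = floor_sqrt n"
  define w where "w = s div 2"
  define K where "K = (2 * w + 1) div m"
  have "(2 * w)\<^sup>2 \<le> s\<^sup>2"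
    by (rule power_mono) (simp_all add: w_def)
  also have "\<dots> \<le> n"
    by (simp add: s_def)
  finally have "4 * w\<^sup>2 \<le> n"
    by (simp add: power_mult_distrib)
  have "s \<le> 2 * w + 1" by (simp add: w_def)
  moreover have "m \<le> s"
    using assms(2) by (simp add: s_def le_floor_sqrtI)
  ultimately have "1 \<le> K"
    using assms(1) div_le_mono[of m "2 * w + 1" m] by (simp add: K_def)
  have "(2 * w + 1) mod m < m" using assms(1) by simp
  moreover have "K * m + (2 * w + 1) mod m = 2 * w + 1" "(K + 1) * m = K * m + m"
    by (simp_all add: K_def)
  ultimately have "2 * w + 1 < (K + 1) * m" by linarith
  moreover have "(K + 1) * m \<le> 2 * K * m"
    using \<open>1 \<le> K\<close> by (intro mult_le_mono1) simp
  ultimately have "real (s + 1) \<le> real (2 * K * m)"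
    using \<open>s \<le> 2 * w + 1\<close> by (simp only: of_nat_le_iff)
  moreover have "sqrt (real n) < real s + 1"
  proof -
    have "real n < real ((Suc s)\<^sup>2)"
      using Suc_floor_sqrt_power2_gt[of n] unfolding s_def by (simp only: of_nat_less_iff)
    then have "real n < (real s + 1)\<^sup>2" by (simp add: add.commute)
    then show ?thesis
      using real_sqrt_less_iff[of "real n" "(real s + 1)\<^sup>2"] by simp
  qed
  ultimately have "sqrt (real n) < 2 * real K * real m"
    by simp
  with \<open>4 * w\<^sup>2 \<le> n\<close> show ?thesis
    unfolding K_def by (rule that)
qed

lemma binomial_residue_sum_ratio:
  assumes "1 \<le> h" "(2 * h)\<^sup>2 \<le> n"
  shows "binomial_residue_sum n (2 * h) a
    \<le> (1 + 32 * real (2 * h) / sqrt (real n)) * binomial_residue_sum n (2 * h) (a + h)"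
proof -
  define m where "m = 2 * h"
  define M where "M = real (n choose (n div 2))"
  define SY where "SY = binomial_residue_sum n m (a + h)"
  have "1 \<le> m" "m\<^sup>2 \<le> n" using assms by (simp_all add: m_def)
  then obtain w where w: "4 * w\<^sup>2 \<le> n"
    and sqrt_n: "sqrt (real n) < 2 * real ((2 * w + 1) div m) * real m"
    by (rule window_width_exists)
  define K where "K = (2 * w + 1) div m"
  have "0 < m\<^sup>2" using \<open>1 \<le> m\<close> by simp
  then have "0 < n" using \<open>m\<^sup>2 \<le> n\<close> by (rule less_le_trans)
  have lower: "real K * M \<le> 8 * SY"
    unfolding K_def M_def SY_def using \<open>1 \<le> m\<close> w by (rule binomial_residue_sum_lower)
  have shift: "binomial_residue_sum n m a \<le> SY + 2 * M"
    unfolding SY_def M_def m_def by (rule binomial_residue_sum_le_shift[OF assms(1)])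
  have "M \<ge> 0" by (simp add: M_def)
  then have "2 * M * sqrt (real n) \<le> 2 * M * (2 * real K * real m)"
    using sqrt_n by (intro mult_left_mono) (simp_all add: K_def)
  also have "\<dots> = 4 * real m * (real K * M)"
    by simp
  also have "\<dots> \<le> 4 * real m * (8 * SY)"
    using lower by (intro mult_left_mono) simp_all
  finally have "2 * M \<le> 32 * real m / sqrt (real n) * SY"
    using \<open>0 < n\<close> by (simp add: field_simps)
  with shift show ?thesis
    unfolding SY_def m_def by (simp add: algebra_simps)
qed

section \<open>Arithmetic progressions modulo a power of two\<close>

lemma pow2_times_odd_decomp:
  fixes d :: nat
  assumes "0 < d"
  obtains v u where "d = 2 ^ v * u" "odd u"
  using assms
proof (induction d arbitrary: thesis rule: less_induct)
  case (less d)
  show ?case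
  proof (cases "odd d")
    case True
    then show ?thesis using less.prems(1)[of 0 d] by simp
  next
    case False
    then obtain e where e: "d = 2 * e" by blast
    with less.prems(2) have "e < d" "0 < e" by simp_all
    then obtain v u where "e = 2 ^ v * u" "odd u" using less.IH by blast
    then show ?thesis using less.prems(1)[of "Suc v" u] e by simp
  qed
qed

lemma cong_mult_pow2_odd_iff:
  fixes c j j' u :: nat
  assumes "v \<le> t" "odd u"
  shows "[c + j * (2 ^ v * u) = c + j' * (2 ^ v * u)] (mod 2 ^ t) \<longleftrightarrow> [j = j'] (mod 2 ^ (t - v))"
proof -
  have T: "(2::nat) ^ t = 2 ^ (t - v) * 2 ^ v"
    using assms(1) by (simp flip: power_add)
  have "[c + j * (2 ^ v * u) = c + j' * (2 ^ v * u)] (mod 2 ^ t)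
      \<longleftrightarrow> [j * u * 2 ^ v = j' * u * 2 ^ v] (mod 2 ^ (t - v) * 2 ^ v)"
    by (simp add: cong_add_lcancel_nat T ac_simps)
  also have "\<dots> \<longleftrightarrow> [j * u = j' * u] (mod 2 ^ (t - v))"
    by (simp add: cong_def mod_mult_mult2)
  also have "\<dots> \<longleftrightarrow> [j = j'] (mod 2 ^ (t - v))"
    using assms(2) by (intro cong_mult_rcancel_nat) simp
  finally show ?thesis .
qed

lemma progression_mod_pow2_period:
  fixes T d :: nat
  assumes T: "T = 2 ^ t" and d: "0 < d" "d < T"
  obtains h where "1 \<le> h" "2 * h \<le> T" "(h * d) mod T = T div 2"
    "\<And>c j j'. (c + j * d) mod T = (c + j' * d) mod T \<longleftrightarrow> [j = j'] (mod 2 * h)"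
proof -
  obtain v u where vu: "d = 2 ^ v * u" "odd u"
    using pow2_times_odd_decomp[OF d(1)] .
  have "2 ^ v \<le> d" using vu odd_pos by (simp add: Suc_leI)
  then have "(2::nat) ^ v < 2 ^ t" using d(2) T by linarith
  then have "v < t" by simp
  define h where "h = (2::nat) ^ (t - 1 - v)"
  have h: "1 \<le> h" "2 * h = 2 ^ (t - v)"
    using \<open>v < t\<close> by (simp_all add: h_def flip: power_Suc)
  then have "2 * h \<le> T" using T by (simp add: power_increasing)
  have "(h * d) mod T = T div 2"
  proof -
    obtain k where "u = 2 * k + 1" using vu(2) oddE by blast
    then have "h * d = T * k + 2 ^ (t - 1)"
      using \<open>v < t\<close> T by (simp add: h_def vu(1) algebra_simps flip: power_add power_Suc)
    moreover have "T div 2 = 2 ^ (t - 1)" "(2::nat) ^ (t - 1) < T"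
      using T \<open>v < t\<close> by (cases t; simp)+
    ultimately show ?thesis by simp
  qed
  moreover have "(c + j * d) mod T = (c + j' * d) mod T \<longleftrightarrow> [j = j'] (mod 2 * h)" for c j j'
    using cong_mult_pow2_odd_iff[of v t u c j j'] \<open>v < t\<close> vu T h(2) by (simp add: cong_def)
  ultimately show ?thesis
    using that h(1) \<open>2 * h \<le> T\<close> by blast
qed

lemma binomial_progression_half_shift:
  fixes T c d n x :: nat
  assumes T: "T = 2 ^ t" and d: "0 < d" "d < T" and n: "T\<^sup>2 \<le> n"
  shows "(\<Sum>j | j \<le> n \<and> (c + j * d) mod T = x. real (n choose j))
    \<le> (1 + 32 * real T / sqrt (real n))
      * (\<Sum>j | j \<le> n \<and> (c + j * d) mod T = (x + T div 2) mod T. real (n choose j))"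
    (is "?S x \<le> _ * ?S ((x + T div 2) mod T)")
proof (cases "\<exists>j0 \<le> n. (c + j0 * d) mod T = x")
  case False
  then have empty: "{j. j \<le> n \<and> (c + j * d) mod T = x} = {}" by auto
  show ?thesis unfolding empty by (simp add: sum_nonneg)
next
  case True
  then obtain j0 where j0: "j0 \<le> n" "(c + j0 * d) mod T = x" by blast
  obtain h where h: "1 \<le> h" "2 * h \<le> T" "(h * d) mod T = T div 2"
    and period: "\<And>c j j'. (c + j * d) mod T = (c + j' * d) mod T \<longleftrightarrow> [j = j'] (mod 2 * h)"
    using progression_mod_pow2_period[OF T d] by blast
  have "(c + (j0 + h) * d) mod T = (x + T div 2) mod T"
    using j0(2) h(3) by (metis add_mult_distrib add.assoc mod_add_eq)
  then have "(c + j * d) mod T = (x + T div 2) mod T \<longleftrightarrow> [j = j0 + h] (mod 2 * h)" for j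
    using period[of c j "j0 + h"] by simp
  moreover have "(c + j * d) mod T = x \<longleftrightarrow> [j = j0] (mod 2 * h)" for j
    using period[of c j j0] j0(2) by simp
  ultimately have "?S x = binomial_residue_sum n (2 * h) j0"
    "?S ((x + T div 2) mod T) = binomial_residue_sum n (2 * h) (j0 + h)"
    by (simp_all add: binomial_residue_sum_def)
  moreover have "(2 * h)\<^sup>2 \<le> n"
    using power_mono[OF h(2), of 2] n by simp
  then have "binomial_residue_sum n (2 * h) j0
      \<le> (1 + 32 * real (2 * h) / sqrt (real n)) * binomial_residue_sum n (2 * h) (j0 + h)"
    by (rule binomial_residue_sum_ratio[OF h(1)])
  moreover have "\<dots> \<le> (1 + 32 * real T / sqrt (real n)) * binomial_residue_sum n (2 * h) (j0 + h)"
    using h(2) by (intro mult_right_mono add_left_mono divide_right_mono)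
      (simp_all add: binomial_residue_sum_def sum_nonneg)
  ultimately show ?thesis by simp
qed

section \<open>Counting subset sums\<close>

lemma card_subsets_insert:
  assumes "finite I" "i \<notin> I"
  shows "card {J. J \<subseteq> insert i I \<and> P J}
    = card {J. J \<subseteq> I \<and> P J} + card {J. J \<subseteq> I \<and> P (insert i J)}"
proof -
  have split: "{J. J \<subseteq> insert i I \<and> P J}
      = {J. J \<subseteq> I \<and> P J} \<union> insert i ` {J. J \<subseteq> I \<and> P (insert i J)}"
  proof (intro equalityI subsetI)
    fix J assume J: "J \<in> {J. J \<subseteq> insert i I \<and> P J}"
    show "J \<in> {J. J \<subseteq> I \<and> P J} \<union> insert i ` {J. J \<subseteq> I \<and> P (insert i J)}"
    proof (cases "i \<in> J")
      case True
      then have "J = insert i (J - {i})" "J - {i} \<subseteq> I" using J by auto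
      then show ?thesis using J by (metis (mono_tags, lifting) UnI2 image_eqI mem_Collect_eq)
    qed (use J in auto)
  qed auto
  have "inj_on (insert i) {J. J \<subseteq> I \<and> P (insert i J)}"
    using assms(2) by (auto simp: inj_on_def)
  moreover have "{J. J \<subseteq> I \<and> P J} \<inter> insert i ` {J. J \<subseteq> I \<and> P (insert i J)} = {}"
    using assms(2) by auto
  ultimately show ?thesis
    unfolding split using assms(1) by (simp add: card_Un_disjoint card_image)
qed

text \<open>The multiplicity of \<open>x\<close> in the multiset \<open>b + {0, d i\<^sub>1} + \<dots> + {0, d i\<^sub>k}\<close> over
  \<open>\<int>\<^sub>T\<close>, where \<open>I = {i\<^sub>1, \<dots>, i\<^sub>k}\<close>.\<close>
definition subset_sum_count :: "nat \<Rightarrow> nat \<Rightarrow> (nat \<Rightarrow> nat) \<Rightarrow> nat set \<Rightarrow> nat \<Rightarrow> real" where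
  "subset_sum_count T b d I x = real (card {J. J \<subseteq> I \<and> (b + sum d J) mod T = x})"

lemma subset_sum_count_insert:
  assumes "finite I" "i \<notin> I"
  shows "subset_sum_count T b d (insert i I) x
    = subset_sum_count T b d I x + subset_sum_count T (b + d i) d I x"
proof -
  have "sum d (insert i J) = d i + sum d J" if "J \<subseteq> I" for J
    using that assms finite_subset[OF that assms(1)] by (subst sum.insert) auto
  then have "{J. J \<subseteq> I \<and> (b + sum d (insert i J)) mod T = x}
      = {J. J \<subseteq> I \<and> (b + d i + sum d J) mod T = x}"
    by (auto simp: add.assoc)
  then show ?thesis
    unfolding subset_sum_count_def using card_subsets_insert[OF assms] by simp
qed

lemma subset_sum_count_const:
  assumes "finite D" "\<And>i. i \<in> D \<Longrightarrow> d i = c"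
  shows "subset_sum_count T b d D x
    = (\<Sum>j | j \<le> card D \<and> (b + j * c) mod T = x. real (card D choose j))"
proof -
  define Q where "Q = {j. j \<le> card D \<and> (b + j * c) mod T = x}"
  have "sum d J = card J * c" if "J \<subseteq> D" for J
    using assms(2) that by (simp add: subset_iff)
  then have "{J. J \<subseteq> D \<and> (b + sum d J) mod T = x} = (\<Union>j\<in>Q. {J. J \<subseteq> D \<and> card J = j})"
    using assms(1) by (auto simp: Q_def card_mono)
  moreover have "card (\<Union>j\<in>Q. {J. J \<subseteq> D \<and> card J = j}) = (\<Sum>j\<in>Q. card D choose j)"
    using assms(1) by (subst card_UN_disjoint) (auto simp: Q_def n_subsets intro: finite_subset)
  ultimately show ?thesis
    by (simp add: subset_sum_count_def Q_def)
qed

lemma add_mod_eq_iff: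
  fixes T a x y :: nat
  assumes "x < T" "a < T"
  shows "(y + a) mod T = x \<longleftrightarrow> y mod T = (x + T - a) mod T"
proof -
  have "(y + a) mod T = x \<longleftrightarrow> [y + a = (x + T - a) + a] (mod T)"
    using assms by (simp add: cong_def)
  also have "\<dots> \<longleftrightarrow> [y = x + T - a] (mod T)"
    by (rule cong_add_rcancel_nat)
  finally show ?thesis
    by (simp add: cong_def)
qed

lemma subset_sum_count_shift:
  assumes "x < T" "a < T"
  shows "subset_sum_count T (b + a) d I x = subset_sum_count T b d I ((x + T - a) mod T)"
proof -
  have "(b + a + sum d J) mod T = x \<longleftrightarrow> (b + sum d J) mod T = (x + T - a) mod T" for J
    using add_mod_eq_iff[OF assms, of "b + sum d J"] by (simp add: ac_simps)
  then show ?thesis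
    by (simp add: subset_sum_count_def)
qed

lemma subset_sum_count_cong:
  assumes "[b = b'] (mod T)" "\<And>i. i \<in> I \<Longrightarrow> d i = d' i"
  shows "subset_sum_count T b d I x = subset_sum_count T b' d' I x"
proof -
  have "sum d J = sum d' J" if "J \<subseteq> I" for J
    using that assms(2) by (intro sum.cong) auto
  then have "(b + sum d J) mod T = (b' + sum d' J) mod T" if "J \<subseteq> I" for J
    using that assms(1) by (metis cong_def mod_add_left_eq)
  then have "{J. J \<subseteq> I \<and> (b + sum d J) mod T = x} = {J. J \<subseteq> I \<and> (b' + sum d' J) mod T = x}"
    by auto
  then show ?thesis
    by (simp add: subset_sum_count_def)
qed

lemma subset_sum_count_pair:
  assumes "x < T" "a < T" "a' < T"
  shows "subset_sum_count T (b + a) (d(k := (a' + T - a) mod T)) {..<Suc k} x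
    = subset_sum_count T b d {..<k} ((x + T - a) mod T)
      + subset_sum_count T b d {..<k} ((x + T - a') mod T)"
proof -
  define d' where "d' = d(k := (a' + T - a) mod T)"
  have "(b + a + d' k) mod T = (b + a + (a' + T - a)) mod T"
    by (simp add: d'_def mod_add_right_eq)
  also have "b + a + (a' + T - a) = b + a' + T"
    using assms(2) by simp
  finally have base: "[b + a + d' k = b + a'] (mod T)"
    by (simp add: cong_def)
  have "subset_sum_count T (b + a) d' {..<Suc k} x
      = subset_sum_count T (b + a) d' {..<k} x + subset_sum_count T (b + a + d' k) d' {..<k} x"
    using subset_sum_count_insert[of "{..<k}" k] by (simp add: lessThan_Suc)
  also have "subset_sum_count T (b + a) d' {..<k} x = subset_sum_count T (b + a) d {..<k} x"
    by (rule subset_sum_count_cong) (simp_all add: d'_def)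
  also have "subset_sum_count T (b + a + d' k) d' {..<k} x = subset_sum_count T (b + a') d {..<k} x"
    by (rule subset_sum_count_cong[OF base]) (simp add: d'_def)
  also have "subset_sum_count T (b + a) d {..<k} x
      = subset_sum_count T b d {..<k} ((x + T - a) mod T)"
    by (rule subset_sum_count_shift[OF assms(1,2)])
  also have "subset_sum_count T (b + a') d {..<k} x
      = subset_sum_count T b d {..<k} ((x + T - a') mod T)"
    by (rule subset_sum_count_shift[OF assms(1,3)])
  finally show ?thesis
    unfolding d'_def .
qed

section \<open>Bias with respect to the half-period shift\<close>

definition half_bias_le :: "nat \<Rightarrow> real \<Rightarrow> (nat \<Rightarrow> real) \<Rightarrow> bool" where
  "half_bias_le T e f \<longleftrightarrow> (\<forall>x<T. f x \<le> (1 + e) * f ((x + T div 2) mod T))"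

lemma half_bias_le_add:
  assumes "half_bias_le T e f" "half_bias_le T e g"
  shows "half_bias_le T e (\<lambda>x. f x + g x)"
  using assms by (simp add: half_bias_le_def distrib_left add_mono)

lemma half_bias_le_mono:
  assumes "half_bias_le T e f" "e \<le> e'" "\<And>x. 0 \<le> f x"
  shows "half_bias_le T e' f"
  unfolding half_bias_le_def
proof (intro allI impI)
  fix x assume "x < T"
  then have "f x \<le> (1 + e) * f ((x + T div 2) mod T)"
    using assms(1) by (simp add: half_bias_le_def)
  also have "\<dots> \<le> (1 + e') * f ((x + T div 2) mod T)"
    using assms(2,3) by (intro mult_right_mono) simp_all
  finally show "f x \<le> (1 + e') * f ((x + T div 2) mod T)" .
qed

lemma half_bias_subset_sum_count_const:
  assumes "T = 2 ^ t" "0 < c" "c < T"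
    and "finite D" "\<And>i. i \<in> D \<Longrightarrow> d i = c" "T\<^sup>2 \<le> card D"
  shows "half_bias_le T (32 * real T / sqrt (real (card D))) (subset_sum_count T b d D)"
  using binomial_progression_half_shift[OF assms(1-3,6)]
  by (simp add: half_bias_le_def subset_sum_count_const[OF assms(4,5)])

lemma half_bias_subset_sum_count_union:
  assumes "finite D" "finite R" "D \<inter> R = {}"
    and "\<And>b. half_bias_le T e (subset_sum_count T b d D)"
  shows "half_bias_le T e (subset_sum_count T b d (D \<union> R))"
  using assms(2,3)
proof (induction R arbitrary: b rule: finite_induct)
  case empty
  then show ?case using assms(4) by simp
next
  case (insert i R)
  then have "finite (D \<union> R)" "i \<notin> D \<union> R" "D \<union> insert i R = insert i (D \<union> R)"
    using assms(1) by auto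
  then show ?case
    using insert by (simp add: subset_sum_count_insert half_bias_le_add)
qed

lemma div_sqrt_le_powr_div_sqrt:
  fixes T N r :: nat
  assumes "0 < r" "r \<le> T * N"
  shows "real T / sqrt (real N) \<le> real T powr (3/2) / sqrt (real r)"
proof -
  have "0 < T * N" using assms by linarith
  then have pos: "0 < T" "0 < N" by simp_all
  have T32: "real T powr (3/2) = real T * sqrt (real T)"
    using powr_add[of "real T" 1 "1/2"] pos by (simp add: powr_half_sqrt)
  have "sqrt (real r) \<le> sqrt (real T) * sqrt (real N)"
    using assms(2) by (simp flip: real_sqrt_mult of_nat_mult)
  then have "real T * sqrt (real T) / (sqrt (real T) * sqrt (real N))
      \<le> real T * sqrt (real T) / sqrt (real r)"
    using assms(1) by (intro frac_le) simp_all
  then show ?thesis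
    using pos by (simp add: T32)
qed

lemma pigeonhole_popular_value:
  fixes d :: "nat \<Rightarrow> nat"
  assumes "2 \<le> T" "T ^ 3 \<le> r" "\<And>i. i < r \<Longrightarrow> 0 < d i \<and> d i < T"
  obtains c where "0 < c" "c < T"
    "T\<^sup>2 \<le> card {i. i < r \<and> d i = c}" "r \<le> T * card {i. i < r \<and> d i = c}"
proof -
  have "d \<in> {..<r} \<rightarrow> {1..<T}"
    using assms(3) by (auto simp: Suc_le_eq)
  then obtain c where c: "c \<in> {1..<T}" and "card (d -` {c} \<inter> {..<r}) * card {1..<T} \<ge> r"
    using pigeonhole_card[of d "{..<r}" "{1..<T}"] assms(1) by auto
  moreover have "d -` {c} \<inter> {..<r} = {i. i < r \<and> d i = c}" by auto
  ultimately have r: "r \<le> (T - 1) * card {i. i < r \<and> d i = c}"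
    by (simp add: mult.commute)
  have "T\<^sup>2 \<le> card {i. i < r \<and> d i = c}"
  proof (rule ccontr)
    assume "\<not> ?thesis"
    then have "(T - 1) * card {i. i < r \<and> d i = c} < (T - 1) * T\<^sup>2"
      using assms(1) by simp
    also have "\<dots> < T ^ 3"
      using assms(1) by (simp add: power3_eq_cube power2_eq_square)
    finally show False using assms(2) r by linarith
  qed
  moreover have "r \<le> T * card {i. i < r \<and> d i = c}"
    using r by (meson diff_le_self le_trans mult_le_mono1)
  ultimately show ?thesis
    using c by (intro that) auto
qed

lemma half_bias_subset_sum_count:
  assumes T: "T = 2 ^ t" "1 \<le> t" and r: "T ^ 3 \<le> r"
    and d: "\<And>i. i < r \<Longrightarrow> 0 < d i \<and> d i < T"
  shows "half_bias_le T (32 * real T powr (3/2) / sqrt (real r)) (subset_sum_count T b d {..<r})"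
proof -
  have "2 \<le> T" using T by (simp add: self_le_power)
  then obtain c where c: "0 < c" "c < T"
    and popular: "T\<^sup>2 \<le> card {i. i < r \<and> d i = c}" "r \<le> T * card {i. i < r \<and> d i = c}"
    using pigeonhole_popular_value r d by blast
  define D where "D = {i. i < r \<and> d i = c}"
  have "finite D" by (simp add: D_def)
  have "half_bias_le T (32 * real T / sqrt (real (card D))) (subset_sum_count T b' d D)" for b'
    using popular by (intro half_bias_subset_sum_count_const[OF T(1) c \<open>finite D\<close>]) (simp_all add: D_def)
  then have "half_bias_le T (32 * real T / sqrt (real (card D)))
      (subset_sum_count T b d (D \<union> ({..<r} - D)))"
    by (intro half_bias_subset_sum_count_union[OF \<open>finite D\<close>]) auto
  moreover have "D \<union> ({..<r} - D) = {..<r}"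
    by (auto simp: D_def)
  ultimately have bias:
    "half_bias_le T (32 * real T / sqrt (real (card D))) (subset_sum_count T b d {..<r})"
    by simp
  have "0 < T ^ 3" using \<open>2 \<le> T\<close> by simp
  then have "0 < r" using r by linarith
  then have "real T / sqrt (real (card D)) \<le> real T powr (3/2) / sqrt (real r)"
    using popular(2) unfolding D_def by (rule div_sqrt_le_powr_div_sqrt)
  then have "32 * real T / sqrt (real (card D)) \<le> 32 * real T powr (3/2) / sqrt (real r)"
    unfolding times_divide_eq_right[symmetric] by (rule mult_left_mono) simp
  with bias show ?thesis
    by (rule half_bias_le_mono) (simp add: subset_sum_count_def)
qed

section \<open>The cone spanned by subset-sum counts\<close>

lemma sum_distinct_pairs:
  fixes g :: "'a \<Rightarrow> 'b::comm_ring_1"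
  assumes "finite A"
  shows "(\<Sum>a\<in>A. \<Sum>a'\<in>A - {a}. g a + g a') = 2 * (of_nat (card A) - 1) * sum g A"
proof -
  have "(\<Sum>a'\<in>A - {a}. g a + g a') = (of_nat (card A) - 1) * g a + (sum g A - g a)"
    if "a \<in> A" for a
  proof -
    have "0 < card A" using that assms by (auto simp: card_gt_0_iff)
    then have "of_nat (card (A - {a})) = (of_nat (card A) - 1 :: 'b)"
      using that by (simp add: of_nat_diff)
    then show ?thesis
      using that assms by (simp add: sum.distrib sum_diff1 mult.commute)
  qed
  then have "(\<Sum>a\<in>A. \<Sum>a'\<in>A - {a}. g a + g a')
      = (\<Sum>a\<in>A. (of_nat (card A) - 1) * g a + (sum g A - g a))"
    by (rule sum.cong[OF refl])
  also have "\<dots> = (of_nat (card A) - 1) * sum g A + (of_nat (card A) * sum g A - sum g A)"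
    by (simp add: sum.distrib sum_subtractf sum_distrib_left)
  also have "\<dots> = 2 * (of_nat (card A) - 1) * sum g A"
    by (simp add: algebra_simps)
  finally show ?thesis .
qed

inductive subset_sum_cone :: "nat \<Rightarrow> nat \<Rightarrow> (nat \<Rightarrow> real) \<Rightarrow> bool" for T k where
  cone_zero: "subset_sum_cone T k (\<lambda>x. 0)"
| cone_add: "subset_sum_cone T k f \<Longrightarrow> subset_sum_cone T k g
    \<Longrightarrow> subset_sum_cone T k (\<lambda>x. f x + g x)"
| cone_scale: "subset_sum_cone T k f \<Longrightarrow> 0 \<le> c \<Longrightarrow> subset_sum_cone T k (\<lambda>x. c * f x)"
| cone_gen: "(\<And>i. i < k \<Longrightarrow> 0 < d i \<and> d i < T)
    \<Longrightarrow> subset_sum_cone T k (subset_sum_count T b d {..<k})"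
| cone_cong: "subset_sum_cone T k f \<Longrightarrow> (\<And>x. x < T \<Longrightarrow> f x = g x) \<Longrightarrow> subset_sum_cone T k g"

lemma subset_sum_cone_sum:
  assumes "finite S" "\<And>s. s \<in> S \<Longrightarrow> subset_sum_cone T k (g s)"
  shows "subset_sum_cone T k (\<lambda>x. \<Sum>s\<in>S. g s x)"
  using assms by (induction S rule: finite_induct) (simp_all add: cone_zero cone_add)

lemma half_bias_le_cone:
  assumes "subset_sum_cone T k f" "0 < T"
    and "\<And>b d. (\<And>i. i < k \<Longrightarrow> 0 < d i \<and> d i < T)
      \<Longrightarrow> half_bias_le T e (subset_sum_count T b d {..<k})"
  shows "half_bias_le T e f"
  using assms(1)
proof (induction rule: subset_sum_cone.induct)
  case cone_zero
  then show ?case by (simp add: half_bias_le_def)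
next
  case (cone_add f g)
  show ?case by (rule half_bias_le_add[OF cone_add.IH])
next
  case (cone_scale f c)
  then show ?case
    by (simp add: half_bias_le_def) (metis mult.left_commute mult_left_mono)
next
  case (cone_gen d b)
  then show ?case by (rule assms(3))
next
  case (cone_cong f g)
  then show ?case
    using assms(2) by (simp add: half_bias_le_def)
qed

lemma add_diff_mod_pos:
  fixes T a a' :: nat
  assumes "a < T" "a' < T" "a \<noteq> a'"
  shows "0 < (a' + T - a) mod T"
  using assms by (cases "a \<le> a'") (auto simp: mod_if)

lemma subset_sum_cone_convolve_count:
  assumes d: "\<And>i. i < k \<Longrightarrow> 0 < d i \<and> d i < T"
    and A: "finite A" "A \<subseteq> {..<T}" "2 \<le> card A"
  shows "subset_sum_cone T (Suc k) (\<lambda>x. \<Sum>a\<in>A. subset_sum_count T b d {..<k} ((x + T - a) mod T))"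
proof -
  (* 2 (card A - 1) times the indicator of A is the sum of the indicators of {a, a'} over the
     ordered pairs a \<noteq> a' of A, and {a, a'} = a + {0, a' - a} adds the difference a' - a. *)
  define D where "D a a' = d(k := (a' + T - a) mod T)" for a a'
  have "subset_sum_cone T (Suc k) (subset_sum_count T (b + a) (D a a') {..<Suc k})"
    if "a \<in> A" "a' \<in> A - {a}" for a a'
  proof (rule subset_sum_cone.cone_gen)
    have "a < T" "a' < T" "a \<noteq> a'" using that A(2) by auto
    then show "0 < D a a' i \<and> D a a' i < T" if "i < Suc k" for i
      using that d add_diff_mod_pos by (cases "i = k") (simp_all add: D_def)
  qed
  then have "subset_sum_cone T (Suc k)
      (\<lambda>x. \<Sum>a\<in>A. \<Sum>a'\<in>A - {a}. subset_sum_count T (b + a) (D a a') {..<Suc k} x)"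
    using A(1) by (intro subset_sum_cone_sum) simp_all
  then have "subset_sum_cone T (Suc k) (\<lambda>x. 1 / (2 * (real (card A) - 1))
      * (\<Sum>a\<in>A. \<Sum>a'\<in>A - {a}. subset_sum_count T (b + a) (D a a') {..<Suc k} x))"
    by (rule subset_sum_cone.cone_scale) (use A(3) in simp)
  then show ?thesis
  proof (rule subset_sum_cone.cone_cong)
    fix x assume "x < T"
    define g where "g a = subset_sum_count T b d {..<k} ((x + T - a) mod T)" for a
    have "(\<Sum>a\<in>A. \<Sum>a'\<in>A - {a}. subset_sum_count T (b + a) (D a a') {..<Suc k} x)
        = (\<Sum>a\<in>A. \<Sum>a'\<in>A - {a}. g a + g a')"
      using \<open>x < T\<close> A(2)
      by (intro sum.cong refl) (auto simp: D_def g_def intro!: subset_sum_count_pair)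
    also have "\<dots> = 2 * (real (card A) - 1) * sum g A"
      using A(1) by (rule sum_distinct_pairs)
    finally show "1 / (2 * (real (card A) - 1))
        * (\<Sum>a\<in>A. \<Sum>a'\<in>A - {a}. subset_sum_count T (b + a) (D a a') {..<Suc k} x)
        = (\<Sum>a\<in>A. subset_sum_count T b d {..<k} ((x + T - a) mod T))"
      using A(3) by (simp add: g_def)
  qed
qed

lemma subset_sum_cone_convolve:
  assumes "subset_sum_cone T k f" "finite A" "A \<subseteq> {..<T}" "2 \<le> card A"
  shows "subset_sum_cone T (Suc k) (\<lambda>x. \<Sum>a\<in>A. f ((x + T - a) mod T))"
  using assms(1)
proof (induction rule: subset_sum_cone.induct)
  case cone_zero
  then show ?case by (simp add: subset_sum_cone.cone_zero)
next
  case (cone_add f g)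
  then show ?case by (simp add: sum.distrib subset_sum_cone.cone_add)
next
  case (cone_scale f c)
  then show ?case by (simp add: sum_distrib_left[symmetric] subset_sum_cone.cone_scale)
next
  case (cone_gen d b)
  then show ?case by (rule subset_sum_cone_convolve_count[OF _ assms(2-4)])
next
  case (cone_cong f g)
  have "A \<noteq> {}" using assms(4) by auto
  then have "0 < T" using assms(3) by fastforce
  then have "(\<lambda>x. \<Sum>a\<in>A. f ((x + T - a) mod T)) = (\<lambda>x. \<Sum>a\<in>A. g ((x + T - a) mod T))"
    using cone_cong.hyps(2) by simp
  then show ?case using cone_cong.IH by simp
qed

lemma sumset_mset_less:
  assumes "0 < T" "y \<in># sumset_mset T A k"
  shows "y < T"
proof (cases k)
  case 0
  then show ?thesis using assms by simp
next
  case (Suc k')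
  show ?thesis
  proof (cases "finite (A k')")
    case True
    then show ?thesis
      using assms Suc by (auto simp: set_mset_sum)
  next
    case False
    then show ?thesis using assms Suc by simp
  qed
qed

lemma count_image_mset_add_mod:
  fixes T x a :: nat and M :: "nat multiset"
  assumes "x < T" "a < T" "\<And>y. y \<in># M \<Longrightarrow> y < T"
  shows "count (image_mset (\<lambda>y. (y + a) mod T) M) x = count M ((x + T - a) mod T)"
proof -
  define y0 where "y0 = (x + T - a) mod T"
  have "(y \<in># M \<and> x = (y + a) mod T) \<longleftrightarrow> (y \<in># M \<and> y = y0)" for y
    using add_mod_eq_iff[OF assms(1,2), of y] assms(3)[of y] unfolding y0_def by (metis mod_less)
  then have "{y. y \<in># M \<and> x = (y + a) mod T} = {y0} \<inter> set_mset M"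
    by auto
  then have "count (image_mset (\<lambda>y. (y + a) mod T) M) x = (\<Sum>y\<in>{y0} \<inter> set_mset M. count M y)"
    by (simp only: count_image_mset')
  also have "\<dots> = count M y0"
    by (cases "y0 \<in># M") (simp_all add: not_in_iff)
  finally show ?thesis
    unfolding y0_def .
qed

lemma count_sumset_mset_Suc:
  assumes "x < T" "A k \<subseteq> {..<T}"
  shows "count (sumset_mset T A (Suc k)) x
    = (\<Sum>a\<in>A k. count (sumset_mset T A k) ((x + T - a) mod T))"
proof -
  have "0 < T" using assms(1) by simp
  then show ?thesis
    using assms sumset_mset_less[of T _ A k]
    by (auto simp: count_sum count_image_mset_add_mod intro!: sum.cong)
qed

lemma subset_sum_cone_sumset:
  assumes "0 < T" "\<And>i. i < k \<Longrightarrow> A i \<subseteq> {..<T} \<and> 2 \<le> card (A i)"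
  shows "subset_sum_cone T k (\<lambda>x. real (count (sumset_mset T A k) x))"
  using assms(2)
proof (induction k)
  case 0
  have "{J. J \<subseteq> {..<0} \<and> (0 + sum id J) mod T = x} = (if x = 0 then {{}} else {})" for x
    using assms(1) by auto
  then have "subset_sum_count T 0 id {..<0} x = real (count (sumset_mset T A 0) x)" for x
    by (simp add: subset_sum_count_def)
  moreover have "subset_sum_cone T 0 (subset_sum_count T 0 id {..<0})"
    by (rule subset_sum_cone.cone_gen) simp
  ultimately show ?case
    by (metis subset_sum_cone.cone_cong)
next
  case (Suc k)
  then have "A k \<subseteq> {..<T}" "2 \<le> card (A k)" by simp_all
  moreover have "finite (A k)" using calculation(1) finite_subset by blast
  ultimately have "subset_sum_cone T (Suc k)
      (\<lambda>x. \<Sum>a\<in>A k. real (count (sumset_mset T A k) ((x + T - a) mod T)))"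
    using Suc by (intro subset_sum_cone_convolve) simp_all
  then show ?case
    by (rule subset_sum_cone.cone_cong)
      (simp add: count_sumset_mset_Suc \<open>A k \<subseteq> {..<T}\<close> del: sumset_mset.simps)
qed

lemma half_bias_sumset_mset:
  assumes T: "T = 2 ^ t" "1 \<le> t" and r: "T ^ 3 \<le> r"
    and A: "\<And>i. i < r \<Longrightarrow> A i \<subseteq> {..<T} \<and> 2 \<le> card (A i)"
  shows "half_bias_le T (32 * real T powr (3/2) / sqrt (real r))
    (\<lambda>x. real (count (sumset_mset T A r) x))"
proof -
  have "0 < T" using T by simp
  show ?thesis
  proof (rule half_bias_le_cone[OF subset_sum_cone_sumset[OF \<open>0 < T\<close>] \<open>0 < T\<close>])
    show "A i \<subseteq> {..<T} \<and> 2 \<le> card (A i)" if "i < r" for i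
      using that by (rule A)
    show "half_bias_le T (32 * real T powr (3/2) / sqrt (real r)) (subset_sum_count T b d {..<r})"
      if "\<And>i. i < r \<Longrightarrow> 0 < d i \<and> d i < T" for b d
      using that by (rule half_bias_subset_sum_count[OF T r])
  qed
qed

lemma bias_at_most_half_subgroup:
  assumes "half_bias_le T e (\<lambda>x. real (count M x))" "0 \<le> e" "\<And>y. y \<in># M \<Longrightarrow> y < T"
  shows "bias_at_most T M {0, T div 2} e"
  unfolding bias_at_most_def
proof (intro ballI)
  fix a h assume "a \<in># M" "h \<in> {0, T div 2}"
  have "a < T" using assms(3) \<open>a \<in># M\<close> by blast
  consider "h = 0" | "h = T div 2" using \<open>h \<in> {0, T div 2}\<close> by blast
  then show "real (count M a) \<le> (1 + e) * real (count M ((a + h) mod T))"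
  proof cases
    case 1
    have "real (count M a) \<le> (1 + e) * real (count M a)"
      using assms(2) by (simp add: mult_le_cancel_right1)
    then show ?thesis using 1 \<open>a < T\<close> by simp
  next
    case 2
    then show ?thesis using assms(1) \<open>a < T\<close> by (simp add: half_bias_le_def)
  qed
qed

theorem theorem4:
  shows "\<exists>c0::real. c0 > 0 \<and>
    (\<forall>(t::nat) (r::nat) (A::nat \<Rightarrow> nat set).
       t \<ge> 1 \<longrightarrow> r \<ge> (2^t)^3 \<longrightarrow>
       (\<forall>i<r. A i \<subseteq> zmod_set (2^t) \<and> card (A i) \<ge> 2) \<longrightarrow>
       bias_at_most (2^t) (sumset_mset (2^t) A r) {0, 2^(t-1)}
         (c0 * real (2^t) powr (3/2) / sqrt (real r)))"
proof (intro exI[of _ 32] conjI allI impI)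
  fix t r :: nat and A :: "nat \<Rightarrow> nat set"
  assume t: "t \<ge> 1" and r: "r \<ge> (2^t)^3" and A: "\<forall>i<r. A i \<subseteq> zmod_set (2^t) \<and> card (A i) \<ge> 2"
  define T where "T = (2::nat) ^ t"
  have "0 < T" by (simp add: T_def)
  have "T div 2 = 2 ^ (t - 1)"
    using t by (cases t) (simp_all add: T_def)
  moreover have
    "bias_at_most T (sumset_mset T A r) {0, T div 2} (32 * real T powr (3/2) / sqrt (real r))"
  proof (rule bias_at_most_half_subgroup)
    show "half_bias_le T (32 * real T powr (3/2) / sqrt (real r))
        (\<lambda>x. real (count (sumset_mset T A r) x))"
      using t r A by (intro half_bias_sumset_mset[OF T_def]) (simp_all add: T_def zmod_set_def)
    show "y < T" if "y \<in># sumset_mset T A r" for y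
      using sumset_mset_less[OF \<open>0 < T\<close> that] .
  qed simp
  ultimately show "bias_at_most (2^t) (sumset_mset (2^t) A r) {0, 2^(t-1)}
      (32 * real (2^t) powr (3/2) / sqrt (real r))"
    by (simp add: T_def)
qed simp

end
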